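(* Let $x\in\mathbb{R}^n$, $d_{\max}>0$, $\alpha>0$ and $\Lambda>0$. Let $\mathcal{D}=\{d_1,\ldots,d_p\}\subset\mathbb{R}^n$ be a $\Lambda$-positive spanning set for $B(x,\alpha)$ such that $\|d_i\|\le d_{\max}\alpha$ for all $i=1,\ldots,p$. Then $\operatorname{cm}(\mathcal{D})\ge \kappa$, where $\kappa:=\frac{1}{d_{\max}\Lambda}$.
   Context: $\|\cdot\|$ is the Euclidean norm and $B(y,r)=\{z\in\mathbb{R}^n:\|z-y\|\le r\}$. Given $x\in\mathbb{R}^n$, $\alpha>0$ and $\Lambda>0$, a set $\{d_1,\ldots,d_p\}\subset\mathbb{R}^n$ is a $\Lambda$-positive spanning set for $B(x,\alpha)$ if for every $v\in B(0,\alpha)$ there exists $c(v)\in\mathbb{R}^p$ with $c(v)\ge 0$ componentwise such that $v=\sum_{i=1}^p c_i(v)d_i$ and $\sum_{i=1}^p c_i(v)\le\Lambda$. The cosine measure of a finite set $\mathcal{D}\subset\mathbb{R}^n$ is $\operatorname{cm}(\mathcal{D}):=\min_{v\neq 0}\max_{d\in\mathcal{D},\, d\neq 0}\frac{d^Tv}{\|d\|\,\|v\|}$. *)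

theory Defs
  imports "HOL-Analysis.Analysis"
begin

definition lambda_pss :: "real \<Rightarrow> 'a::euclidean_space \<Rightarrow> real \<Rightarrow> (nat \<Rightarrow> 'a) \<Rightarrow> nat \<Rightarrow> bool" where
  "lambda_pss \<Lambda> x \<alpha> d p \<longleftrightarrow>
     (\<forall>v \<in> cball 0 \<alpha>. \<exists>c :: nat \<Rightarrow> real.
        (\<forall>i<p. c i \<ge> 0) \<and> v = (\<Sum>i<p. c i *\<^sub>R d i) \<and> (\<Sum>i<p. c i) \<le> \<Lambda>)"

definition cosine_measure :: "'a::euclidean_space set \<Rightarrow> real" where
  "cosine_measure D = (INF v \<in> - {0}. Max {(d \<bullet> v) / (norm d * norm v) | d. d \<in> D \<and> d \<noteq> 0})"

end

theory Submission
  imports Defs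
begin

text \<open>Write a unit vector \<open>u\<close> as \<open>\<alpha> u = \<Sum> c\<^sub>i d\<^sub>i\<close> with \<open>c \<ge> 0\<close> and \<open>\<Sum> c\<^sub>i \<le> \<Lambda>\<close>.
  If every cosine between \<open>u\<close> and a nonzero \<open>d\<^sub>i\<close> is at most \<open>M\<close>, then
  \<open>\<alpha> = \<Sum> c\<^sub>i (d\<^sub>i \<bullet> u) \<le> \<Lambda> \<cdot> max M 0 \<cdot> d\<^sub>m\<^sub>a\<^sub>x \<alpha>\<close>, hence \<open>M \<ge> 1 / (d\<^sub>m\<^sub>a\<^sub>x \<Lambda>)\<close>.\<close>

definition cosines :: "'a::real_inner set \<Rightarrow> 'a \<Rightarrow> real set" where
  "cosines D v = {(e \<bullet> v) / (norm e * norm v) | e. e \<in> D \<and> e \<noteq> 0}"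

lemma finite_cosines: "finite D \<Longrightarrow> finite (cosines D v)"
  unfolding cosines_def by simp

lemma inner_le_Max_cosines:
  assumes "finite D" and "e \<in> D"
  shows "e \<bullet> v \<le> max (Max (cosines D v)) 0 * (norm e * norm v)"
proof (cases "e = 0 \<or> v = 0")
  case False
  then have pos: "norm e * norm v > 0" by simp
  have "(e \<bullet> v) / (norm e * norm v) \<in> cosines D v"
    using assms(2) False unfolding cosines_def by blast
  then have "(e \<bullet> v) / (norm e * norm v) \<le> max (Max (cosines D v)) 0"
    using finite_cosines[OF assms(1)] by (simp add: le_max_iff_disj)
  then show ?thesis using pos by (simp add: divide_le_eq)
qed auto

lemma inner_nonneg_combination_le:
  fixes d :: "nat \<Rightarrow> 'a::real_inner"
  assumes "\<forall>i<p. c i \<ge> 0" and "\<forall>i<p. d i \<bullet> v \<le> b"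
  shows "(\<Sum>i<p. c i *\<^sub>R d i) \<bullet> v \<le> (\<Sum>i<p. c i) * b"
proof -
  have "(\<Sum>i<p. c i *\<^sub>R d i) \<bullet> v = (\<Sum>i<p. c i * (d i \<bullet> v))"
    by (simp add: inner_sum_left)
  also have "\<dots> \<le> (\<Sum>i<p. c i * b)"
    using assms by (intro sum_mono mult_left_mono) auto
  finally show ?thesis by (simp add: sum_distrib_right)
qed

lemma lambda_pss_Max_cosines_ge:
  fixes d :: "nat \<Rightarrow> 'a::euclidean_space"
  assumes "dmax > 0" and "\<alpha> > 0" and "\<Lambda> > 0"
    and pss: "lambda_pss \<Lambda> x \<alpha> d p"
    and norm_d: "\<forall>i<p. norm (d i) \<le> dmax * \<alpha>"
    and "v \<noteq> 0"
  shows "1 / (dmax * \<Lambda>) \<le> Max (cosines (d ` {..<p}) v)"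
proof -
  \<comment> \<open>Truncating at 0 covers \<open>d i = 0\<close> and spares showing the set of cosines nonempty
    (\<open>Max {}\<close> is junk); \<open>M > 0\<close> is recovered at the end.\<close>
  define M where "M = max (Max (cosines (d ` {..<p}) v)) 0"
  define w where "w = (\<alpha> / norm v) *\<^sub>R v"
  have "w \<in> cball 0 \<alpha>"
    using \<open>\<alpha> > 0\<close> \<open>v \<noteq> 0\<close> by (simp add: w_def)
  then obtain c where c_nonneg: "\<forall>i<p. c i \<ge> 0" and w_eq: "w = (\<Sum>i<p. c i *\<^sub>R d i)"
      and c_sum: "(\<Sum>i<p. c i) \<le> \<Lambda>"
    using pss unfolding lambda_pss_def by blast
  have M_nonneg: "M \<ge> 0" by (simp add: M_def)
  have "d i \<bullet> v \<le> M * (dmax * \<alpha> * norm v)" if "i < p" for i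
  proof -
    have "d i \<bullet> v \<le> M * (norm (d i) * norm v)"
      unfolding M_def using that by (intro inner_le_Max_cosines) auto
    also have "\<dots> \<le> M * (dmax * \<alpha> * norm v)"
      using M_nonneg norm_d that by (intro mult_left_mono mult_right_mono) auto
    finally show ?thesis .
  qed
  then have "w \<bullet> v \<le> (\<Sum>i<p. c i) * (M * (dmax * \<alpha> * norm v))"
    unfolding w_eq using c_nonneg by (intro inner_nonneg_combination_le) auto
  also have "\<dots> \<le> \<Lambda> * (M * (dmax * \<alpha> * norm v))"
    using c_sum M_nonneg \<open>dmax > 0\<close> \<open>\<alpha> > 0\<close> by (intro mult_right_mono) auto
  finally have "\<alpha> * norm v \<le> (\<Lambda> * M * dmax) * (\<alpha> * norm v)"
    using \<open>v \<noteq> 0\<close> by (simp add: w_def power2_norm_eq_inner[symmetric] power2_eq_square mult_ac)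
  then have "1 \<le> \<Lambda> * M * dmax"
    using \<open>\<alpha> > 0\<close> \<open>v \<noteq> 0\<close> by simp
  then have "M > 0"
    using M_nonneg by (cases "M = 0") auto
  moreover have "1 / (dmax * \<Lambda>) \<le> M"
    using \<open>1 \<le> \<Lambda> * M * dmax\<close> \<open>dmax > 0\<close> \<open>\<Lambda> > 0\<close> by (simp add: field_simps mult_ac)
  ultimately show ?thesis by (simp add: M_def max_def split: if_splits)
qed

theorem lemma3p2:
  fixes x :: "'a::euclidean_space" and d :: "nat \<Rightarrow> 'a" and p :: nat
    and dmax \<alpha> \<Lambda> :: real
  assumes "dmax > 0" and "\<alpha> > 0" and "\<Lambda> > 0"
    and "lambda_pss \<Lambda> x \<alpha> d p"
    and "\<forall>i<p. norm (d i) \<le> dmax * \<alpha>"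
  shows "cosine_measure (d ` {..<p}) \<ge> 1 / (dmax * \<Lambda>)"
proof -
  have "- {0::'a} \<noteq> {}"
    using nonzero_Basis SOME_Basis by blast
  moreover have "cosine_measure (d ` {..<p}) = (INF v \<in> - {0}. Max (cosines (d ` {..<p}) v))"
    unfolding cosine_measure_def cosines_def ..
  ultimately show ?thesis
    using lambda_pss_Max_cosines_ge[OF assms] by (auto intro: cINF_greatest)
qed

end
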